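(* Let $\alpha=c+d\rho\in\mathbb{Z}[\rho]$ with $7\le N(\alpha)\equiv 1 \pmod 6$, and suppose $\alpha$ is not an associate of any (rational) integer. Let $\ell=\gcd(c,d)$, $c'=c/\ell$, $d'=d/\ell$ and $\alpha'=c'+d'\rho$. Then $EJ_\alpha$ is an $\ell^2$-fold cover of a 6-valent first-kind Frobenius circulant (with cyclic kernel) that is isomorphic to $EJ_{\alpha'}$.
   Context: $\rho=(1+\sqrt{-3})/2$, $\mathbb{Z}[\rho]=\{x+y\rho: x,y\in\mathbb{Z}\}$ with norm $N(x+y\rho)=x^2+xy+y^2$; $\alpha,\beta$ are associates if $\alpha=\beta\rho^j$ for some integer $j$. For $N(\gamma)\ge 7$, $EJ_\gamma$ is the Cayley graph on the additive group of $\mathbb{Z}[\rho]/(\gamma)$ with connection set $\{\pm[1]_\gamma,\pm[\rho]_\gamma,\pm[\rho^2]_\gamma\}$. A $k$-fold cover of $\Gamma_2$ by $\Gamma_1$ is a surjection $V(\Gamma_1)\to V(\Gamma_2)$ restricting to bijections between neighbourhoods, with all fibres of size $k$. For $n\ge 7$, $TL_n(a,b,c)$ is the Cayley graph on $\mathbb{Z}_n$ with connection set $\{\pm[a],\pm[b],\pm[c]\}$ (these six residues distinct). A Frobenius group is a transitive, non-regular permutation group in which only the identity fixes two points; a finite one is $K\rtimes H$ with regular normal kernel $K$ and point stabiliser $H$ acting on $K$ by conjugation. A first-kind $K\rtimes H$-Frobenius graph is $\mathrm{Cay}(K,s^H)$ with $\langle s^H\rangle=K$ and $|H|$ even or $s$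 an involution. A 6-valent first-kind Frobenius circulant with cyclic kernel is a 6-valent $TL_n(a,b,c)$ that is a first-kind $\mathbb{Z}_n\rtimes H$-Frobenius graph for some $H\le\mathbb{Z}_n^*$ with $\mathbb{Z}_n\rtimes H$ (acting by $[x]^{([y],[m])}=[(x+y)m]$) Frobenius with kernel $\mathbb{Z}_n$. *)

theory Defs
  imports Main
begin

section \<open>Eisenstein integers Z[rho], represented as pairs (x,y) meaning x + y*rho\<close>

type_synonym eis = "int \<times> int"

definition eis_add :: "eis \<Rightarrow> eis \<Rightarrow> eis" where
  "eis_add u v = (fst u + fst v, snd u + snd v)"

definition eis_sub :: "eis \<Rightarrow> eis \<Rightarrow> eis" where
  "eis_sub u v = (fst u - fst v, snd u - snd v)"

text \<open>rho^2 = rho - 1, so (x1 + y1 rho)(x2 + y2 rho) = (x1 x2 - y1 y2) + (x1 y2 + x2 y1 + y1 y2) rho\<close>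
definition eis_mult :: "eis \<Rightarrow> eis \<Rightarrow> eis" where
  "eis_mult u v = (fst u * fst v - snd u * snd v,
                   fst u * snd v + fst v * snd u + snd u * snd v)"

definition eis_norm :: "eis \<Rightarrow> int" where
  "eis_norm u = fst u ^ 2 + fst u * snd u + snd u ^ 2"

definition eis_rho :: eis where "eis_rho = (0, 1)"

fun eis_pow :: "eis \<Rightarrow> nat \<Rightarrow> eis" where
  "eis_pow u 0 = (1, 0)"
| "eis_pow u (Suc n) = eis_mult u (eis_pow u n)"

text \<open>alpha and beta are associates if alpha = beta * rho^j for some j (rho has order 6,
  so natural exponents cover all integer exponents).\<close>
definition eis_associate :: "eis \<Rightarrow> eis \<Rightarrow> bool" where
  "eis_associate a b \<longleftrightarrow> (\<exists>j::nat. a = eis_mult b (eis_pow eis_rho j))"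

type_synonym 'a graph = "'a set \<times> ('a \<Rightarrow> 'a \<Rightarrow> bool)"

definition verts :: "'a graph \<Rightarrow> 'a set" where "verts G = fst G"
definition adj :: "'a graph \<Rightarrow> 'a \<Rightarrow> 'a \<Rightarrow> bool" where "adj G = snd G"

definition nbhd :: "'a graph \<Rightarrow> 'a \<Rightarrow> 'a set" where
  "nbhd G v = {u \<in> verts G. adj G v u}"

definition graph_iso :: "'a graph \<Rightarrow> 'b graph \<Rightarrow> bool" where
  "graph_iso G H \<longleftrightarrow> (\<exists>f. bij_betw f (verts G) (verts H) \<and>
      (\<forall>x\<in>verts G. \<forall>y\<in>verts G. adj G x y \<longleftrightarrow> adj H (f x) (f y)))"

definition is_k_fold_cover :: "nat \<Rightarrow> 'a graph \<Rightarrow> 'b graph \<Rightarrow> bool" where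
  "is_k_fold_cover k G1 G2 \<longleftrightarrow> (\<exists>p. p ` verts G1 = verts G2 \<and>
      (\<forall>v\<in>verts G1. bij_betw p (nbhd G1 v) (nbhd G2 (p v))) \<and>
      (\<forall>w\<in>verts G2. card {v \<in> verts G1. p v = w} = k))"

definition eis_cong_rel :: "eis \<Rightarrow> (eis \<times> eis) set" where
  "eis_cong_rel g = {(u, v). \<exists>q. eis_sub u v = eis_mult q g}"

text \<open>connection set {+-1, +-rho, +-rho^2}, with rho^2 = -1 + rho\<close>
definition EJ_conn :: "eis set" where
  "EJ_conn = {(1,0), (-1,0), (0,1), (0,-1), (-1,1), (1,-1)}"

definition EJ :: "eis \<Rightarrow> eis set graph" where
  "EJ g = (UNIV // eis_cong_rel g,
           \<lambda>X Y. \<exists>x\<in>X. \<exists>y\<in>Y. eis_sub y x \<in> EJ_conn)"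

definition TL_conn :: "int \<Rightarrow> int \<Rightarrow> int \<Rightarrow> int \<Rightarrow> int set" where
  "TL_conn n a b c = {a mod n, (-a) mod n, b mod n, (-b) mod n, c mod n, (-c) mod n}"

definition TL :: "int \<Rightarrow> int \<Rightarrow> int \<Rightarrow> int \<Rightarrow> int graph" where
  "TL n a b c = ({0..<n}, \<lambda>x y. (y - x) mod n \<in> TL_conn n a b c)"

definition six_valent_TL :: "int \<Rightarrow> int \<Rightarrow> int \<Rightarrow> int \<Rightarrow> bool" where
  "six_valent_TL n a b c \<longleftrightarrow> n \<ge> 7 \<and> card (TL_conn n a b c) = 6"

definition unit_subgroup :: "int \<Rightarrow> int set \<Rightarrow> bool" where
  "unit_subgroup n H \<longleftrightarrow> H \<subseteq> {m \<in> {0..<n}. coprime m n} \<and> 1 mod n \<in> H \<and>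
      (\<forall>h\<in>H. \<forall>h'\<in>H. (h * h') mod n \<in> H) \<and>
      (\<forall>h\<in>H. \<exists>h'\<in>H. (h * h') mod n = 1 mod n)"

text \<open>The permutation group Z_n \<rtimes> H acting on Z_n by x \<mapsto> (x+y)m.\<close>
definition affine_group :: "int \<Rightarrow> int set \<Rightarrow> (int \<Rightarrow> int) set" where
  "affine_group n H = {(\<lambda>x. ((x + y) * m) mod n) | y m. y \<in> {0..<n} \<and> m \<in> H}"

definition is_frobenius_perm_group :: "int set \<Rightarrow> (int \<Rightarrow> int) set \<Rightarrow> bool" where
  "is_frobenius_perm_group X G \<longleftrightarrow>
     (\<forall>x\<in>X. \<forall>z\<in>X. \<exists>g\<in>G. g x = z) \<and>
     (\<exists>g\<in>G. (\<exists>x\<in>X. g x \<noteq> x) \<and> (\<exists>x\<in>X. g x = x)) \<and>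
     (\<forall>g\<in>G. \<forall>x\<in>X. \<forall>y\<in>X. x \<noteq> y \<and> g x = x \<and> g y = y \<longrightarrow> (\<forall>z\<in>X. g z = z))"

text \<open>Z_n \<rtimes> H is a Frobenius group with kernel Z_n (the translations): the Frobenius
  kernel (identity together with the fixed-point-free elements) is exactly the set of
  translations.\<close>
definition frobenius_with_cyclic_kernel :: "int \<Rightarrow> int set \<Rightarrow> bool" where
  "frobenius_with_cyclic_kernel n H \<longleftrightarrow>
     is_frobenius_perm_group {0..<n} (affine_group n H) \<and>
     (\<forall>g\<in>affine_group n H.
        ((\<forall>x\<in>{0..<n}. g x = x) \<or> (\<forall>x\<in>{0..<n}. g x \<noteq> x)) \<longleftrightarrow>
        (\<exists>y\<in>{0..<n}. \<forall>x\<in>{0..<n}. g x = (x + y) mod n))"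

inductive_set zn_span :: "int \<Rightarrow> int set \<Rightarrow> int set" for n T where
  zero: "0 \<in> zn_span n T"
| gen: "t \<in> T \<Longrightarrow> t \<in> zn_span n T"
| add: "u \<in> zn_span n T \<Longrightarrow> v \<in> zn_span n T \<Longrightarrow> (u + v) mod n \<in> zn_span n T"
| neg: "u \<in> zn_span n T \<Longrightarrow> (- u) mod n \<in> zn_span n T"

definition orbit_mult :: "int \<Rightarrow> int \<Rightarrow> int set \<Rightarrow> int set" where
  "orbit_mult n s H = {(s * h) mod n | h. h \<in> H}"

text \<open>TL_n(a,b,c) is a 6-valent first-kind Frobenius circulant with cyclic kernel:
  it equals Cay(Z_n, s^H) for some H \<le> Z_n^* with Z_n \<rtimes> H Frobenius with kernel Z_n,
  s^H generating Z_n, and |H| even or s an involution.\<close>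
definition first_kind_frobenius_circulant :: "int \<Rightarrow> int \<Rightarrow> int \<Rightarrow> int \<Rightarrow> bool" where
  "first_kind_frobenius_circulant n a b c \<longleftrightarrow> six_valent_TL n a b c \<and>
     (\<exists>H s. unit_subgroup n H \<and> frobenius_with_cyclic_kernel n H \<and>
        s \<in> {0..<n} \<and> TL_conn n a b c = orbit_mult n s H \<and>
        zn_span n (orbit_mult n s H) = {0..<n} \<and>
        (even (card H) \<or> (s \<noteq> 0 \<and> (2 * s) mod n = 0)))"

end

theory Submission
  imports Defs "HOL-Number_Theory.Cong"
begin

text \<open>
  Write \<open>\<alpha> = \<ell>\<alpha>'\<close> with \<open>\<alpha>' = p + q\<rho>\<close> primitive and \<open>n = N(\<alpha>')\<close>. Since \<open>gcd(q, n) = 1\<close>, the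
  congruence \<open>p + qr \<equiv> 0 (mod n)\<close> has a solution \<open>r\<close>, and \<open>x + y\<rho> \<mapsto> x + yr\<close> is a ring
  homomorphism \<open>\<int>[\<rho>] \<rightarrow> \<int>\<^sub>n\<close> with kernel \<open>(\<alpha>')\<close>. It maps the six units onto
  \<open>{\<plusminus>1, \<plusminus>r, \<plusminus>(r - 1)}\<close>, injectively because distinct units differ by an element of norm at
  most \<open>4 < n\<close>. Hence \<open>EJ\<^sub>\<alpha>\<^sub>'\<close> is isomorphic to \<open>TL\<^sub>n(1, r, r - 1)\<close>, and \<open>EJ\<^sub>\<alpha>\<close> covers it with
  fibres \<open>(\<alpha>')/(\<alpha>) \<cong> \<int>[\<rho>]/(\<ell>)\<close> of size \<open>\<ell>\<^sup>2\<close>.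
  The image \<open>H\<close> of the units is a subgroup of \<open>\<int>\<^sub>n\<^sup>*\<close>, and for \<open>1 \<noteq> h \<in> H\<close> the difference
  \<open>h - 1\<close> is the image of an element of norm 1, 3 or 4, hence a unit as \<open>n \<equiv> 1 (mod 6)\<close>.
  So every non-translation in \<open>\<int>\<^sub>n \<rtimes> H\<close> has exactly one fixed point, which makes it a
  Frobenius group with kernel \<open>\<int>\<^sub>n\<close>, and \<open>TL\<^sub>n(1, r, r - 1) = Cay(\<int>\<^sub>n, 1\<^sup>H)\<close>.
\<close>

section \<open>Arithmetic of the Eisenstein integers\<close>

definition eis_conj :: "eis \<Rightarrow> eis" where
  "eis_conj v = (fst v + snd v, - snd v)"

definition eis_dvd :: "eis \<Rightarrow> eis \<Rightarrow> bool" where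
  "eis_dvd g u \<longleftrightarrow> (\<exists>s. u = eis_mult s g)"

lemma eis_mult_assoc: "eis_mult (eis_mult u v) w = eis_mult u (eis_mult v w)"
  by (simp add: eis_mult_def algebra_simps)

lemma eis_mult_commute: "eis_mult u v = eis_mult v u"
  by (simp add: eis_mult_def algebra_simps)

lemma eis_mult_int_left [simp]: "eis_mult (l, 0) (p, q) = (l * p, l * q)"
  by (simp add: eis_mult_def)

lemma eis_mult_conj: "eis_mult v (eis_conj v) = (eis_norm v, 0)"
  by (simp add: eis_mult_def eis_conj_def eis_norm_def power2_eq_square algebra_simps)

lemma eis_norm_mult: "eis_norm (eis_mult u v) = eis_norm u * eis_norm v"
  by (simp add: eis_norm_def eis_mult_def power2_eq_square algebra_simps)

lemma eis_norm_conj [simp]: "eis_norm (eis_conj v) = eis_norm v"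
  by (simp add: eis_norm_def eis_conj_def power2_eq_square algebra_simps)

lemma eis_norm_pos: "u \<noteq> (0, 0) \<Longrightarrow> 0 < eis_norm u"
proof -
  assume "u \<noteq> (0, 0)"
  obtain x y where u: "u = (x, y)" by fastforce
  have "4 * eis_norm u = (2 * x + y)\<^sup>2 + 3 * y\<^sup>2"
    by (simp add: u eis_norm_def power2_eq_square algebra_simps)
  moreover have "0 < (2 * x + y)\<^sup>2 + 3 * y\<^sup>2"
    using \<open>u \<noteq> (0, 0)\<close> u by (cases "y = 0") (auto simp: add_nonneg_pos)
  ultimately show ?thesis by linarith
qed

lemma eis_norm_mod_3: "eis_norm u mod 3 \<noteq> 2"
proof -
  define x where "x = (fst u - snd u) mod 3"
  have "eis_norm u = (fst u - snd u)\<^sup>2 + 3 * (fst u * snd u)"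
    by (simp add: eis_norm_def power2_eq_square algebra_simps)
  then have "eis_norm u mod 3 = x\<^sup>2 mod 3"
    by (simp add: x_def power_mod)
  moreover have "x = 0 \<or> x = 1 \<or> x = 2" unfolding x_def by linarith
  ultimately show ?thesis by (elim disjE) simp_all
qed

lemma eis_mult_right_cancel: "eis_mult x g = eis_mult y g \<Longrightarrow> g \<noteq> (0, 0) \<Longrightarrow> x = y"
proof (rule ccontr)
  assume eq: "eis_mult x g = eis_mult y g" and "g \<noteq> (0, 0)" "x \<noteq> y"
  have "eis_mult (eis_sub x y) g = (0, 0)"
    using eq by (simp add: eis_mult_def eis_sub_def algebra_simps)
  then have "eis_norm (eis_sub x y) * eis_norm g = 0"
    by (simp flip: eis_norm_mult) (simp add: eis_norm_def)
  moreover have "eis_sub x y \<noteq> (0, 0)" using \<open>x \<noteq> y\<close> by (auto simp: eis_sub_def prod_eq_iff)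
  ultimately show False
    using eis_norm_pos[of "eis_sub x y"] eis_norm_pos[of g] \<open>g \<noteq> (0, 0)\<close> by simp
qed

lemma eis_dvd_refl: "eis_dvd g g"
  unfolding eis_dvd_def by (rule exI[of _ "(1, 0)"]) (simp add: eis_mult_def)

lemma eis_dvd_zero: "eis_dvd g (0, 0)"
  unfolding eis_dvd_def by (rule exI[of _ "(0, 0)"]) (simp add: eis_mult_def)

lemma eis_dvd_mult_left: "eis_dvd g u \<Longrightarrow> eis_dvd g (eis_mult v u)"
proof -
  assume "eis_dvd g u"
  then obtain s where "u = eis_mult s g" by (auto simp: eis_dvd_def)
  then have "eis_mult v u = eis_mult (eis_mult v s) g" by (simp add: eis_mult_assoc)
  then show ?thesis unfolding eis_dvd_def by blast
qed

lemma eis_dvd_trans: "eis_dvd g h \<Longrightarrow> eis_dvd h u \<Longrightarrow> eis_dvd g u"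
proof -
  assume "eis_dvd g h" "eis_dvd h u"
  then obtain s t where "h = eis_mult s g" "u = eis_mult t h" by (auto simp: eis_dvd_def)
  then have "u = eis_mult (eis_mult t s) g" by (simp add: eis_mult_assoc)
  then show ?thesis unfolding eis_dvd_def by blast
qed

lemma eis_dvd_add: "eis_dvd g u \<Longrightarrow> eis_dvd g v \<Longrightarrow> eis_dvd g (eis_add u v)"
proof -
  assume "eis_dvd g u" "eis_dvd g v"
  then obtain s t where "u = eis_mult s g" "v = eis_mult t g" by (auto simp: eis_dvd_def)
  then have "eis_add u v = eis_mult (eis_add s t) g"
    by (simp add: eis_mult_def eis_add_def algebra_simps)
  then show ?thesis unfolding eis_dvd_def by blast
qed

lemma eis_dvd_sub: "eis_dvd g u \<Longrightarrow> eis_dvd g v \<Longrightarrow> eis_dvd g (eis_sub u v)"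
proof -
  assume "eis_dvd g u" "eis_dvd g v"
  then obtain s t where "u = eis_mult s g" "v = eis_mult t g" by (auto simp: eis_dvd_def)
  then have "eis_sub u v = eis_mult (eis_sub s t) g"
    by (simp add: eis_mult_def eis_sub_def algebra_simps)
  then show ?thesis unfolding eis_dvd_def by blast
qed

lemma eis_dvd_norm_le: "eis_dvd g u \<Longrightarrow> u \<noteq> (0, 0) \<Longrightarrow> eis_norm g \<le> eis_norm u"
proof -
  assume "eis_dvd g u" "u \<noteq> (0, 0)"
  then obtain s where s: "u = eis_mult s g" by (auto simp: eis_dvd_def)
  then have "s \<noteq> (0, 0)" using \<open>u \<noteq> (0, 0)\<close> by (auto simp: eis_mult_def)
  then have "1 \<le> eis_norm s" using eis_norm_pos[of s] by simp
  moreover have "0 \<le> eis_norm g"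
    using eis_norm_pos[of g] by (cases "g = (0, 0)") (auto simp: eis_norm_def)
  ultimately have "1 * eis_norm g \<le> eis_norm s * eis_norm g" by (rule mult_right_mono)
  then show ?thesis by (simp add: s eis_norm_mult)
qed

text \<open>Multiplying by the conjugate reduces this to the norm dividing both \<open>mp\<close> and \<open>mq\<close>.\<close>
lemma eis_dvd_int_iff:
  assumes "coprime p q"
  shows "eis_dvd (p, q) (m, 0) \<longleftrightarrow> eis_norm (p, q) dvd m"
proof
  assume "eis_dvd (p, q) (m, 0)"
  then obtain s where s: "(m, 0) = eis_mult s (p, q)" by (auto simp: eis_dvd_def)
  have "eis_mult (m, 0) (eis_conj (p, q)) = eis_mult s (eis_norm (p, q), 0)"
    by (simp add: s eis_mult_assoc eis_mult_conj)
  then have "m * (p + q) = fst s * eis_norm (p, q)" "m * q = - snd s * eis_norm (p, q)"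
    by (auto simp: eis_mult_def eis_conj_def algebra_simps)
  then have "eis_norm (p, q) dvd m * (p + q)" and dvd_mq: "eis_norm (p, q) dvd m * q"
    by simp_all
  then have "eis_norm (p, q) dvd m * (p + q) - m * q" by (rule dvd_diff)
  then have "eis_norm (p, q) dvd m * p" by (simp add: algebra_simps)
  with dvd_mq have "eis_norm (p, q) dvd gcd (m * p) (m * q)" by simp
  also have "gcd (m * p) (m * q) = \<bar>m\<bar>" using assms by (simp add: gcd_mult_left)
  finally show "eis_norm (p, q) dvd m" by simp
next
  assume "eis_norm (p, q) dvd m"
  then obtain k where "m = eis_norm (p, q) * k" by (rule dvdE)
  moreover have "eis_mult (eis_conj (p, q)) (p, q) = (eis_norm (p, q), 0)"
    by (metis eis_mult_commute eis_mult_conj)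
  ultimately have "(m, 0) = eis_mult (eis_mult (k, 0) (eis_conj (p, q))) (p, q)"
    by (simp add: eis_mult_assoc)
  then show "eis_dvd (p, q) (m, 0)" unfolding eis_dvd_def by blast
qed

section \<open>The units and the graph \<open>EJ\<close>\<close>

lemma EJ_conn_eq_norm_1: "EJ_conn = {v. eis_norm v = 1}"
proof (intro equalityI subsetI)
  fix v assume "v \<in> EJ_conn"
  then show "v \<in> {v. eis_norm v = 1}" by (auto simp: EJ_conn_def eis_norm_def)
next
  fix v assume "v \<in> {v. eis_norm v = 1}"
  obtain x y where v: "v = (x, y)" by fastforce
  have sq: "(2 * x + y)\<^sup>2 + 3 * y\<^sup>2 = 4"
    using \<open>v \<in> {v. eis_norm v = 1}\<close> by (simp add: v eis_norm_def power2_eq_square algebra_simps)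
  have "y\<^sup>2 < 2" using sq zero_le_power2[of "2 * x + y"] by linarith
  then have "y\<^sup>2 \<le> 1\<^sup>2" by simp
  then have "\<bar>y\<bar> \<le> 1" using power2_le_iff_abs_le[of 1 y] by simp
  have "(2 * x + y)\<^sup>2 \<le> 4" using sq zero_le_power2[of y] by linarith
  then have "(2 * x + y)\<^sup>2 \<le> 2\<^sup>2" by simp
  then have "\<bar>2 * x + y\<bar> \<le> 2" using power2_le_iff_abs_le[of 2 "2 * x + y"] by simp
  with \<open>\<bar>y\<bar> \<le> 1\<close> have "x = -1 \<or> x = 0 \<or> x = 1" "y = -1 \<or> y = 0 \<or> y = 1" by linarith+
  then show "v \<in> EJ_conn"
    using sq by (elim disjE) (simp_all add: v EJ_conn_def)
qed

lemma EJ_conn_mult: "u \<in> EJ_conn \<Longrightarrow> v \<in> EJ_conn \<Longrightarrow> eis_mult u v \<in> EJ_conn"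
  by (simp add: EJ_conn_eq_norm_1 eis_norm_mult)

lemma EJ_conn_conj: "v \<in> EJ_conn \<Longrightarrow> eis_conj v \<in> EJ_conn"
  by (simp add: EJ_conn_eq_norm_1)

lemma card_EJ_conn: "card EJ_conn = 6"
  by (simp add: EJ_conn_def)

lemma EJ_conn_rho_power: "v \<in> EJ_conn \<Longrightarrow> \<exists>j. v = eis_pow eis_rho j"
proof -
  have "eis_pow eis_rho 0 = (1, 0)" "eis_pow eis_rho 1 = (0, 1)" "eis_pow eis_rho 2 = (-1, 1)"
    "eis_pow eis_rho 3 = (-1, 0)" "eis_pow eis_rho 4 = (0, -1)" "eis_pow eis_rho 5 = (1, -1)"
    by (simp_all add: eis_rho_def eis_mult_def eval_nat_numeral)
  then show "v \<in> EJ_conn \<Longrightarrow> \<exists>j. v = eis_pow eis_rho j"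
    unfolding EJ_conn_def by (metis empty_iff insert_iff)
qed

lemma EJ_conn_diff_norm_le: "u \<in> EJ_conn \<Longrightarrow> v \<in> EJ_conn \<Longrightarrow> eis_norm (eis_sub u v) \<le> 4"
  unfolding EJ_conn_def by (elim insertE emptyE) (simp_all add: eis_sub_def eis_norm_def)

abbreviation eis_class :: "eis \<Rightarrow> eis \<Rightarrow> eis set" where
  "eis_class g a \<equiv> eis_cong_rel g `` {a}"

lemma eis_cong_rel_iff: "(a, b) \<in> eis_cong_rel g \<longleftrightarrow> eis_dvd g (eis_sub a b)"
  by (simp add: eis_cong_rel_def eis_dvd_def)

lemma equiv_eis_cong_rel: "equiv UNIV (eis_cong_rel g)"
proof (rule equivI)
  show "refl (eis_cong_rel g)"
  proof (rule reflI)
    fix a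
    have "eis_sub a a = (0, 0)" by (simp add: eis_sub_def)
    then show "(a, a) \<in> eis_cong_rel g" by (simp add: eis_cong_rel_iff eis_dvd_zero)
  qed
  show "sym (eis_cong_rel g)"
  proof (rule symI)
    fix a b assume "(a, b) \<in> eis_cong_rel g"
    then have "eis_dvd g (eis_sub (0, 0) (eis_sub a b))"
      by (simp add: eis_cong_rel_iff eis_dvd_sub eis_dvd_zero)
    moreover have "eis_sub (0, 0) (eis_sub a b) = eis_sub b a" by (simp add: eis_sub_def)
    ultimately show "(b, a) \<in> eis_cong_rel g" by (simp add: eis_cong_rel_iff)
  qed
  show "trans (eis_cong_rel g)"
  proof (rule transI)
    fix a b c assume "(a, b) \<in> eis_cong_rel g" "(b, c) \<in> eis_cong_rel g"
    then have "eis_dvd g (eis_add (eis_sub a b) (eis_sub b c))"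
      by (simp add: eis_cong_rel_iff eis_dvd_add)
    moreover have "eis_add (eis_sub a b) (eis_sub b c) = eis_sub a c"
      by (simp add: eis_sub_def eis_add_def)
    ultimately show "(a, c) \<in> eis_cong_rel g" by (simp add: eis_cong_rel_iff)
  qed
qed simp

lemma eis_class_eq_iff: "eis_class g a = eis_class g b \<longleftrightarrow> eis_dvd g (eis_sub a b)"
  using eq_equiv_class_iff[OF equiv_eis_cong_rel] by (simp add: eis_cong_rel_iff)

lemma verts_EJ: "verts (EJ g) = range (eis_class g)"
  by (auto simp: verts_def EJ_def quotient_def)

lemma adj_EJ:
  "adj (EJ g) (eis_class g a) (eis_class g b) \<longleftrightarrow> (\<exists>c\<in>EJ_conn. eis_class g b = eis_class g (eis_add a c))"
proof
  assume "adj (EJ g) (eis_class g a) (eis_class g b)"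
  then obtain x y where xy: "x \<in> eis_class g a" "y \<in> eis_class g b" "eis_sub y x \<in> EJ_conn"
    by (auto simp: adj_def EJ_def)
  then have "eis_dvd g (eis_sub b y)" "eis_dvd g (eis_sub a x)"
    by (simp_all add: eis_cong_rel_iff)
  then have "eis_dvd g (eis_sub (eis_sub b y) (eis_sub a x))" by (rule eis_dvd_sub)
  moreover have "eis_sub (eis_sub b y) (eis_sub a x) = eis_sub b (eis_add a (eis_sub y x))"
    by (simp add: eis_sub_def eis_add_def)
  ultimately show "\<exists>c\<in>EJ_conn. eis_class g b = eis_class g (eis_add a c)"
    using xy(3) by (auto simp: eis_class_eq_iff)
next
  assume "\<exists>c\<in>EJ_conn. eis_class g b = eis_class g (eis_add a c)"
  then obtain c where c: "c \<in> EJ_conn" "eis_class g b = eis_class g (eis_add a c)" by blast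
  have "a \<in> eis_class g a" "eis_add a c \<in> eis_class g b"
    using equiv_class_self[OF equiv_eis_cong_rel] c(2) by auto
  moreover have "eis_sub (eis_add a c) a = c" by (simp add: eis_sub_def eis_add_def)
  ultimately show "adj (EJ g) (eis_class g a) (eis_class g b)"
    using c(1) unfolding adj_def EJ_def snd_conv by metis
qed

lemma nbhd_EJ: "nbhd (EJ g) (eis_class g a) = (\<lambda>c. eis_class g (eis_add a c)) ` EJ_conn"
  unfolding nbhd_def verts_EJ using adj_EJ by blast

text \<open>The classes of \<open>\<int>[\<rho>]/(\<ell>\<beta>)\<close> inside one coset of \<open>(\<beta>)\<close> are represented by
  \<open>w + (i + j\<rho>)\<beta>\<close> with \<open>0 \<le> i, j < \<ell>\<close>.\<close>
lemma card_eis_classes_in_coset: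
  assumes "(p, q) \<noteq> (0, 0)" "0 < l"
  shows "card (eis_class (l * p, l * q) ` {a. eis_dvd (p, q) (eis_sub a w)}) = nat (l\<^sup>2)"
proof -
  let ?g = "(l * p, l * q)"
  define F where "F ij = eis_class ?g (eis_add w (eis_mult ij (p, q)))" for ij
  have "inj_on F ({0..<l} \<times> {0..<l})"
  proof (rule inj_onI)
    fix x y assume xy: "x \<in> {0..<l} \<times> {0..<l}" "y \<in> {0..<l} \<times> {0..<l}" "F x = F y"
    have "eis_sub (eis_add w (eis_mult x (p, q))) (eis_add w (eis_mult y (p, q)))
        = eis_mult (eis_sub x y) (p, q)"
      by (simp add: eis_sub_def eis_add_def eis_mult_def algebra_simps)
    then obtain s where "eis_mult (eis_sub x y) (p, q) = eis_mult s ?g"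
      using xy(3) by (auto simp: F_def eis_class_eq_iff eis_dvd_def)
    also have "\<dots> = eis_mult (eis_mult s (l, 0)) (p, q)"
      by (simp flip: eis_mult_int_left add: eis_mult_assoc)
    finally have "eis_sub x y = eis_mult s (l, 0)"
      using eis_mult_right_cancel assms(1) by blast
    then have "l dvd fst x - fst y" "l dvd snd x - snd y"
      by (auto simp: eis_sub_def eis_mult_def prod_eq_iff)
    then show "x = y"
      using xy(1,2) by (auto simp: prod_eq_iff mod_eq_dvd_iff[symmetric])
  qed
  moreover have "F ` ({0..<l} \<times> {0..<l}) = eis_class ?g ` {a. eis_dvd (p, q) (eis_sub a w)}"
  proof (intro equalityI subsetI)
    fix X assume "X \<in> F ` ({0..<l} \<times> {0..<l})"
    then obtain ij where "X = F ij" by blast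
    moreover have "eis_sub (eis_add w (eis_mult ij (p, q))) w = eis_mult ij (p, q)"
      by (simp add: eis_sub_def eis_add_def)
    ultimately show "X \<in> eis_class ?g ` {a. eis_dvd (p, q) (eis_sub a w)}"
      using eis_dvd_mult_left[OF eis_dvd_refl, of "(p, q)" ij] unfolding F_def by auto
  next
    fix X assume "X \<in> eis_class ?g ` {a. eis_dvd (p, q) (eis_sub a w)}"
    then obtain a t where X: "X = eis_class ?g a" and t: "eis_sub a w = eis_mult t (p, q)"
      by (auto simp: eis_dvd_def)
    define i where "i = (fst t mod l, snd t mod l)"
    define k where "k = (fst t div l, snd t div l)"
    have "t = eis_add i (eis_mult k (l, 0))"
      by (simp add: i_def k_def eis_add_def eis_mult_def prod_eq_iff mult.commute)
    then have "eis_sub a (eis_add w (eis_mult i (p, q))) = eis_mult k ?g"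
      using t by (simp add: eis_sub_def eis_add_def eis_mult_def prod_eq_iff algebra_simps)
    then have "eis_dvd ?g (eis_sub a (eis_add w (eis_mult i (p, q))))"
      unfolding eis_dvd_def by blast
    then have "X = F i" by (simp add: X F_def eis_class_eq_iff)
    moreover have "i \<in> {0..<l} \<times> {0..<l}" using assms(2) by (simp add: i_def)
    ultimately show "X \<in> F ` ({0..<l} \<times> {0..<l})" by blast
  qed
  ultimately have "card (eis_class ?g ` {a. eis_dvd (p, q) (eis_sub a w)}) = card ({0..<l} \<times> {0..<l})"
    by (metis card_image)
  also have "\<dots> = nat (l\<^sup>2)"
    using assms(2) by (simp add: card_cartesian_product power2_eq_square nat_mult_distrib)
  finally show ?thesis .
qed

lemma verts_TL [simp]: "verts (TL n a b c) = {0..<n}"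
  by (simp add: verts_def TL_def)

lemma adj_TL [simp]: "adj (TL n a b c) x y \<longleftrightarrow> (y - x) mod n \<in> TL_conn n a b c"
  by (simp add: adj_def TL_def)

lemma nbhd_TL:
  assumes "0 < n"
  shows "nbhd (TL n a b c) x = (\<lambda>s. (x + s) mod n) ` TL_conn n a b c"
proof (intro equalityI subsetI)
  fix y assume "y \<in> nbhd (TL n a b c) x"
  then have "y \<in> {0..<n}" "(y - x) mod n \<in> TL_conn n a b c" by (simp_all add: nbhd_def)
  moreover have "y = (x + (y - x) mod n) mod n"
    using \<open>y \<in> {0..<n}\<close> by (simp add: mod_add_right_eq)
  ultimately show "y \<in> (\<lambda>s. (x + s) mod n) ` TL_conn n a b c" by blast
next
  fix y assume "y \<in> (\<lambda>s. (x + s) mod n) ` TL_conn n a b c"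
  then obtain s where s: "s \<in> TL_conn n a b c" "y = (x + s) mod n" by blast
  have "s mod n = s" using s(1) by (auto simp: TL_conn_def)
  then have "(y - x) mod n = s" by (simp add: s(2) mod_diff_left_eq)
  then show "y \<in> nbhd (TL n a b c) x" using s assms by (simp add: nbhd_def)
qed

lemma graph_iso_sym: "graph_iso G H \<Longrightarrow> graph_iso H G"
proof -
  assume "graph_iso G H"
  then obtain f where f: "bij_betw f (verts G) (verts H)"
    and adj: "\<forall>x\<in>verts G. \<forall>y\<in>verts G. adj G x y \<longleftrightarrow> adj H (f x) (f y)"
    by (auto simp: graph_iso_def)
  let ?g = "inv_into (verts G) f"
  have "bij_betw ?g (verts H) (verts G)" using f by (rule bij_betw_inv_into)
  moreover have "adj H x y \<longleftrightarrow> adj G (?g x) (?g y)" if "x \<in> verts H" "y \<in> verts H" for x y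
    using adj that f bij_betw_inv_into_right[OF f] bij_betwE[OF bij_betw_inv_into[OF f]] by metis
  ultimately show ?thesis unfolding graph_iso_def by blast
qed

lemma one_fold_cover_imp_graph_iso: "is_k_fold_cover 1 G H \<Longrightarrow> graph_iso G H"
proof -
  assume "is_k_fold_cover 1 G H"
  then obtain p where onto: "p ` verts G = verts H"
    and local_bij: "\<forall>v\<in>verts G. bij_betw p (nbhd G v) (nbhd H (p v))"
    and fibre: "\<forall>w\<in>verts H. card {v \<in> verts G. p v = w} = 1"
    by (auto simp: is_k_fold_cover_def)
  have "inj_on p (verts G)"
  proof (rule inj_onI)
    fix x y assume "x \<in> verts G" "y \<in> verts G" "p x = p y"
    then have "card {v \<in> verts G. p v = p x} = 1" using onto fibre by blast
    moreover have "x \<in> {v \<in> verts G. p v = p x}" "y \<in> {v \<in> verts G. p v = p x}"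
      using \<open>x \<in> verts G\<close> \<open>y \<in> verts G\<close> \<open>p x = p y\<close> by simp_all
    ultimately show "x = y" by (metis card_1_singletonE singletonD)
  qed
  then have bij: "bij_betw p (verts G) (verts H)" using onto by (simp add: bij_betw_def)
  have "adj G x y \<longleftrightarrow> adj H (p x) (p y)" if "x \<in> verts G" "y \<in> verts G" for x y
  proof -
    have "adj G x y \<longleftrightarrow> p y \<in> p ` nbhd G x"
      using that \<open>inj_on p (verts G)\<close> by (auto simp: nbhd_def inj_on_image_mem_iff)
    also have "p ` nbhd G x = nbhd H (p x)"
      using local_bij that by (simp add: bij_betw_def)
    finally show ?thesis using that onto by (auto simp: nbhd_def)
  qed
  with bij show ?thesis unfolding graph_iso_def by blast
qed

section \<open>Reduction modulo a primitive Eisenstein integer\<close>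

definition eis_eval :: "int \<Rightarrow> eis \<Rightarrow> int" where
  "eis_eval r v = fst v + snd v * r"

lemma eis_eval_add [simp]: "eis_eval r (eis_add u v) = eis_eval r u + eis_eval r v"
  by (simp add: eis_eval_def eis_add_def algebra_simps)

lemma eis_eval_sub [simp]: "eis_eval r (eis_sub u v) = eis_eval r u - eis_eval r v"
  by (simp add: eis_eval_def eis_sub_def algebra_simps)

lemma eis_eval_int [simp]: "eis_eval r (m, 0) = m"
  by (simp add: eis_eval_def)

lemma coprime_norm_eis: "coprime p q \<Longrightarrow> coprime q (eis_norm (p, q))"
proof -
  assume "coprime p q"
  have "[p\<^sup>2 = eis_norm (p, q)] (mod q)"
    by (simp add: eis_norm_def cong_iff_dvd_diff power2_eq_square algebra_simps)
  moreover have "coprime (p\<^sup>2) q" using \<open>coprime p q\<close> by simp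
  ultimately show ?thesis using cong_imp_coprime coprime_commute by blast
qed

lemma eis_reduction_root_exists: "coprime p q \<Longrightarrow> \<exists>r. eis_norm (p, q) dvd p + q * r"
proof -
  assume "coprime p q"
  then obtain u where "[q * u = 1] (mod eis_norm (p, q))"
    using coprime_norm_eis cong_solve_coprime_int by blast
  then have "eis_norm (p, q) dvd p * (1 - q * u)"
    by (simp add: cong_iff_dvd_diff dvd_diff_commute)
  then have "eis_norm (p, q) dvd p + q * (- p * u)"
    by (simp add: algebra_simps)
  then show ?thesis by blast
qed

text \<open>For primitive \<open>p + q\<rho>\<close> of norm \<open>n\<close> and a root \<open>r\<close> of \<open>p + qx\<close> modulo \<open>n\<close>, evaluation at
  \<open>\<rho> = r\<close> is the reduction \<open>\<int>[\<rho>] \<rightarrow> \<int>[\<rho>]/(p + q\<rho>) \<cong> \<int>\<^sub>n\<close>.\<close>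
locale eis_reduction =
  fixes p q n r :: int
  assumes coprime_pq: "coprime p q"
    and norm_eq: "eis_norm (p, q) = n"
    and root: "n dvd p + q * r"
begin

lemma n_pos: "0 < n"
proof -
  have "(p, q) \<noteq> (0, 0)" using coprime_pq by auto
  then show ?thesis using eis_norm_pos norm_eq by fastforce
qed

lemma dvd_int_iff: "eis_dvd (p, q) (m, 0) \<longleftrightarrow> n dvd m"
  using eis_dvd_int_iff[OF coprime_pq] norm_eq by simp

lemma dvd_rho_minus_r: "eis_dvd (p, q) (-r, 1)"
proof -
  have "eis_dvd (p, q) (eis_sub (p, q) (p + q * r, 0))"
    using root by (simp add: eis_dvd_sub eis_dvd_refl dvd_int_iff)
  then have by_q: "eis_dvd (p, q) (eis_mult (q, 0) (-r, 1))"
    by (simp add: eis_sub_def eis_mult_def)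
  have "eis_dvd (p, q) (eis_mult (-r, 1) (n, 0))"
    by (simp add: eis_dvd_mult_left dvd_int_iff)
  then have by_n: "eis_dvd (p, q) (eis_mult (n, 0) (-r, 1))"
    by (simp add: eis_mult_commute)
  obtain a b where "a * q + b * n = 1"
    using bezout_int[of q n] coprime_norm_eis coprime_pq norm_eq by auto
  then have "(-r, 1) = eis_mult (a * q + b * n, 0) (-r, 1)"
    by (simp add: eis_mult_def)
  also have "\<dots> = eis_add (eis_mult (a, 0) (eis_mult (q, 0) (-r, 1))) (eis_mult (b, 0) (eis_mult (n, 0) (-r, 1)))"
    by (simp add: eis_mult_def eis_add_def algebra_simps)
  finally show ?thesis
    using by_q by_n by (metis eis_dvd_add eis_dvd_mult_left)
qed

lemma eis_dvd_iff_eval: "eis_dvd (p, q) v \<longleftrightarrow> n dvd eis_eval r v"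
proof -
  have "eis_sub v (eis_eval r v, 0) = eis_mult (snd v, 0) (-r, 1)"
    by (simp add: eis_sub_def eis_eval_def eis_mult_def)
  then have "eis_dvd (p, q) (eis_sub v (eis_eval r v, 0))"
    using eis_dvd_mult_left[OF dvd_rho_minus_r] by metis
  moreover have "v = eis_add (eis_sub v (eis_eval r v, 0)) (eis_eval r v, 0)"
    "(eis_eval r v, 0) = eis_sub v (eis_sub v (eis_eval r v, 0))"
    by (simp_all add: eis_sub_def eis_add_def)
  ultimately show ?thesis
    by (metis dvd_int_iff eis_dvd_add eis_dvd_sub)
qed

lemma eval_mod_eq_iff: "eis_eval r u mod n = eis_eval r v mod n \<longleftrightarrow> eis_dvd (p, q) (eis_sub u v)"
  by (simp add: eis_dvd_iff_eval mod_eq_dvd_iff)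

lemma dvd_r_sq: "n dvd r\<^sup>2 - r + 1"
proof -
  have "(r\<^sup>2 - r + 1, 0) = eis_mult (1 - r, -1) (-r, 1)"
    by (simp add: eis_mult_def power2_eq_square algebra_simps)
  then show ?thesis
    using eis_dvd_mult_left[OF dvd_rho_minus_r] dvd_int_iff by metis
qed

lemma eval_mult_mod: "eis_eval r (eis_mult u v) mod n = (eis_eval r u * eis_eval r v) mod n"
proof -
  have "eis_eval r (eis_mult u v) - eis_eval r u * eis_eval r v = - (snd u * snd v) * (r\<^sup>2 - r + 1)"
    by (simp add: eis_eval_def eis_mult_def power2_eq_square algebra_simps)
  then show ?thesis using dvd_r_sq by (simp add: mod_eq_dvd_iff)
qed

text \<open>\<open>v\<close> times its conjugate is \<open>N(v)\<close>, so evaluation maps elements of norm prime to \<open>n\<close> to units.\<close>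
lemma coprime_eval: "coprime (eis_norm v) n \<Longrightarrow> coprime (eis_eval r v) n"
proof -
  assume "coprime (eis_norm v) n"
  moreover have "[eis_norm v = eis_eval r v * eis_eval r (eis_conj v)] (mod n)"
    using eval_mult_mod[of v "eis_conj v"] by (simp add: eis_mult_conj cong_def)
  ultimately have "coprime (eis_eval r v * eis_eval r (eis_conj v)) n"
    by (rule cong_imp_coprime[rotated])
  then show ?thesis by simp
qed

lemma eval_mod_inj_on_EJ_conn:
  assumes "5 \<le> n"
  shows "inj_on (\<lambda>c. eis_eval r c mod n) EJ_conn"
proof (rule inj_onI)
  fix u v assume uv: "u \<in> EJ_conn" "v \<in> EJ_conn" "eis_eval r u mod n = eis_eval r v mod n"
  then have "eis_dvd (p, q) (eis_sub u v)" by (simp add: eval_mod_eq_iff)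
  then have "eis_sub u v = (0, 0) \<or> n \<le> eis_norm (eis_sub u v)"
    using eis_dvd_norm_le norm_eq by fastforce
  then show "u = v"
    using EJ_conn_diff_norm_le[OF uv(1,2)] assms by (auto simp: eis_sub_def prod_eq_iff)
qed

lemma TL_conn_eq_eval_image: "TL_conn n 1 r (r - 1) = (\<lambda>c. eis_eval r c mod n) ` EJ_conn"
  by (auto simp: TL_conn_def EJ_conn_def eis_eval_def)

end

section \<open>Affine groups over \<open>\<int>\<^sub>n\<close>\<close>

lemma translation_fixes_iff:
  fixes n x y :: int
  shows "x \<in> {0..<n} \<Longrightarrow> (x + y) mod n = x \<longleftrightarrow> n dvd y"
  using mod_eq_dvd_iff[of "x + y" n x] by simp

lemma affine_unique_fixed_point:
  fixes n m y :: int
  assumes "0 < n" "coprime (m - 1) n"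
  shows "\<exists>!x. x \<in> {0..<n} \<and> ((x + y) * m) mod n = x"
proof -
  have fixed_iff: "((x + y) * m) mod n = x \<longleftrightarrow> [(m - 1) * x = - (y * m)] (mod n)"
    if "x \<in> {0..<n}" for x
  proof -
    have "((x + y) * m) mod n = x \<longleftrightarrow> n dvd (x + y) * m - x"
      using that mod_eq_dvd_iff[of "(x + y) * m" n x] by simp
    also have "(x + y) * m - x = (m - 1) * x - - (y * m)" by (simp add: algebra_simps)
    finally show ?thesis by (simp add: cong_iff_dvd_diff)
  qed
  obtain v where v: "[(m - 1) * v = 1] (mod n)"
    using cong_solve_coprime_int[OF assms(2)] by blast
  define x0 where "x0 = (- (y * m) * v) mod n"
  have "[x0 = - (y * m) * v] (mod n)" by (simp add: x0_def)
  then have "[(m - 1) * x0 = (m - 1) * (- (y * m) * v)] (mod n)" by (rule cong_scalar_left)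
  also have "(m - 1) * (- (y * m) * v) = - (y * m) * ((m - 1) * v)" by (simp add: algebra_simps)
  also have "[- (y * m) * ((m - 1) * v) = - (y * m) * 1] (mod n)"
    using v by (rule cong_scalar_left)
  finally have "x0 \<in> {0..<n} \<and> ((x0 + y) * m) mod n = x0"
    using assms(1) fixed_iff[of x0] by (simp add: x0_def)
  moreover have "x1 = x2" if "x1 \<in> {0..<n}" "((x1 + y) * m) mod n = x1"
    "x2 \<in> {0..<n}" "((x2 + y) * m) mod n = x2" for x1 x2
  proof -
    have "[(m - 1) * x1 = (m - 1) * x2] (mod n)"
      using that fixed_iff cong_sym cong_trans by meson
    then have "[x1 = x2] (mod n)" using cong_mult_lcancel assms(2) by blast
    then show ?thesis using that by (simp add: cong_def)
  qed
  ultimately show ?thesis by blast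
qed

lemma affine_group_memI: "y \<in> {0..<n} \<Longrightarrow> m \<in> H \<Longrightarrow> (\<lambda>x. ((x + y) * m) mod n) \<in> affine_group n H"
  by (auto simp: affine_group_def)

lemma affine_group_translation_or_unique_fixed_point:
  assumes "0 < n" "H \<subseteq> {0..<n}" "\<And>m. m \<in> H \<Longrightarrow> m \<noteq> 1 \<Longrightarrow> coprime (m - 1) n"
    and "g \<in> affine_group n H"
  shows "(\<exists>y\<in>{0..<n}. \<forall>x\<in>{0..<n}. g x = (x + y) mod n) \<or> (\<exists>!x. x \<in> {0..<n} \<and> g x = x)"
proof -
  obtain y m where g: "g = (\<lambda>x. ((x + y) * m) mod n)" "y \<in> {0..<n}" "m \<in> H"
    using assms(4) by (auto simp: affine_group_def)
  show ?thesis
  proof (cases "m = 1")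
    case True
    then show ?thesis using g by auto
  next
    case False
    then show ?thesis using g assms affine_unique_fixed_point by simp
  qed
qed

text \<open>The last hypothesis says that \<open>H\<close> acts fixed-point-freely on \<open>\<int>\<^sub>n \<setminus> {0}\<close>.\<close>
lemma frobenius_with_cyclic_kernelI:
  assumes n: "2 \<le> n" and H: "unit_subgroup n H" and nontrivial: "\<exists>m\<in>H. m \<noteq> 1"
    and fixed_point_free: "\<And>m. m \<in> H \<Longrightarrow> m \<noteq> 1 \<Longrightarrow> coprime (m - 1) n"
  shows "frobenius_with_cyclic_kernel n H"
proof -
  let ?G = "affine_group n H"
  have H_range: "H \<subseteq> {0..<n}" and one: "1 \<in> H"
    using H n by (auto simp: unit_subgroup_def)
  have other_point: "\<exists>z\<in>{0..<n}. z \<noteq> x" for x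
    using n by (cases "x = 0") (auto intro: bexI[of _ 0] bexI[of _ 1])
  have cases: "(\<exists>y\<in>{0..<n}. \<forall>x\<in>{0..<n}. g x = (x + y) mod n) \<or> (\<exists>!x. x \<in> {0..<n} \<and> g x = x)"
    if "g \<in> ?G" for g
    using affine_group_translation_or_unique_fixed_point[OF _ H_range fixed_point_free that] n by simp
  have translation_dichotomy: "(\<forall>x\<in>{0..<n}. (x + y) mod n = x) \<or> (\<forall>x\<in>{0..<n}. (x + y) mod n \<noteq> x)"
    for y :: int
    using translation_fixes_iff by blast
  have transitive: "\<forall>x\<in>{0..<n}. \<forall>z\<in>{0..<n}. \<exists>g\<in>?G. g x = z"
  proof (intro ballI)
    fix x z assume "x \<in> {0..<n}" "z \<in> {0..<n}"
    then have "((x + (z - x) mod n) * 1) mod n = z" by (simp add: mod_add_right_eq)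
    moreover have "(z - x) mod n \<in> {0..<n}" using n by simp
    then have "(\<lambda>w. ((w + (z - x) mod n) * 1) mod n) \<in> ?G" using one by (rule affine_group_memI)
    ultimately show "\<exists>g\<in>?G. g x = z" by (auto intro!: bexI[of _ "\<lambda>w. ((w + (z - x) mod n) * 1) mod n"])
  qed
  obtain m where m: "m \<in> H" "m \<noteq> 1" using nontrivial by blast
  then have "\<exists>!x. x \<in> {0..<n} \<and> ((x + 0) * m) mod n = x"
    using n fixed_point_free by (intro affine_unique_fixed_point) simp_all
  moreover have "(\<lambda>x. ((x + 0) * m) mod n) \<in> ?G"
    using affine_group_memI[of 0 n m H] m n by simp
  ultimately have nonregular: "\<exists>g\<in>?G. (\<exists>x\<in>{0..<n}. g x \<noteq> x) \<and> (\<exists>x\<in>{0..<n}. g x = x)"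
    using other_point by metis
  have two_fixed_points: "\<forall>z\<in>{0..<n}. g z = z"
    if "g \<in> ?G" "x \<in> {0..<n}" "x' \<in> {0..<n}" "x \<noteq> x'" "g x = x" "g x' = x'" for g x x'
    using cases[OF that(1)] translation_dichotomy that(2-6) by metis
  have kernel: "((\<forall>x\<in>{0..<n}. g x = x) \<or> (\<forall>x\<in>{0..<n}. g x \<noteq> x)) \<longleftrightarrow>
      (\<exists>y\<in>{0..<n}. \<forall>x\<in>{0..<n}. g x = (x + y) mod n)" if "g \<in> ?G" for g
    using cases[OF that] translation_dichotomy other_point by metis
  show ?thesis
    unfolding frobenius_with_cyclic_kernel_def is_frobenius_perm_group_def
    using transitive nonregular two_fixed_points kernel by blast
qed

lemma zn_span_eq_if_one_mem:
  assumes "0 < n" "1 \<in> T" "T \<subseteq> {0..<n}"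
  shows "zn_span n T = {0..<n}"
proof
  show "zn_span n T \<subseteq> {0..<n}"
  proof
    fix w assume "w \<in> zn_span n T"
    then show "w \<in> {0..<n}" using assms by induction auto
  qed
  have "int k \<in> zn_span n T" if "int k < n" for k
    using that
  proof (induction k)
    case 0
    show ?case by (simp add: zn_span.zero)
  next
    case (Suc k)
    then have "int k \<in> zn_span n T" by simp
    then have "(int k + 1) mod n \<in> zn_span n T"
      using zn_span.gen[OF assms(2)] by (rule zn_span.add)
    then show ?case using Suc.prems by (simp add: add.commute)
  qed
  then show "{0..<n} \<subseteq> zn_span n T"
    by (auto simp: atLeastLessThan_iff) (metis nonneg_int_cases)
qed

lemma orbit_mult_one: "H \<subseteq> {0..<n} \<Longrightarrow> orbit_mult n 1 H = H"
  by (force simp: orbit_mult_def)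

section \<open>The circulant \<open>TL\<^sub>n(1, r, r - 1)\<close>\<close>

lemma coprime_if_le_4:
  fixes k n :: int
  assumes "coprime n 6" "0 < k" "k \<le> 4"
  shows "coprime k n"
proof -
  have "coprime 6 n" using assms(1) by (simp add: coprime_commute)
  then have divisor: "coprime d n" if "d dvd 6" for d
    using coprime_divisors[OF that dvd_refl] by blast
  have two: "coprime 2 n" and "coprime 3 n" by (rule divisor; simp)+
  moreover have "coprime (2 * 2) n" using two by (simp only: coprime_mult_left_iff)
  moreover have "k = 1 \<or> k = 2 \<or> k = 3 \<or> k = 4" using assms(2,3) by linarith
  ultimately show ?thesis by auto
qed

context eis_reduction
begin

lemma unit_subgroup_TL_conn: "unit_subgroup n (TL_conn n 1 r (r - 1))"
proof -
  let ?H = "(\<lambda>c. eis_eval r c mod n) ` EJ_conn"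
  have "?H \<subseteq> {m \<in> {0..<n}. coprime m n}"
    using n_pos coprime_eval by (auto simp: EJ_conn_eq_norm_1)
  moreover have "1 mod n \<in> ?H"
    by (rule image_eqI[of _ _ "(1, 0)"]) (simp_all add: EJ_conn_def)
  moreover have "(h * h') mod n \<in> ?H" if h: "h \<in> ?H" "h' \<in> ?H" for h h'
  proof -
    obtain c c' where "c \<in> EJ_conn" "c' \<in> EJ_conn" "h = eis_eval r c mod n" "h' = eis_eval r c' mod n"
      using h by blast
    then have "c \<in> EJ_conn" "c' \<in> EJ_conn" "(h * h') mod n = eis_eval r (eis_mult c c') mod n"
      by (simp_all add: eval_mult_mod mod_mult_eq)
    then show ?thesis using EJ_conn_mult by blast
  qed
  moreover have "\<exists>h'\<in>?H. (h * h') mod n = 1 mod n" if h: "h \<in> ?H" for h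
  proof -
    obtain c where c: "c \<in> EJ_conn" "h = eis_eval r c mod n" using h by blast
    have "(h * (eis_eval r (eis_conj c) mod n)) mod n = eis_eval r (eis_mult c (eis_conj c)) mod n"
      by (simp add: c eval_mult_mod mod_mult_eq)
    also have "\<dots> = 1 mod n"
      using c(1) by (simp add: eis_mult_conj EJ_conn_eq_norm_1)
    finally show ?thesis using EJ_conn_conj[OF c(1)] by blast
  qed
  ultimately show ?thesis by (simp add: unit_subgroup_def TL_conn_eq_eval_image)
qed

text \<open>\<open>h - 1\<close> is the image of \<open>c - 1\<close>, whose norm is 1, 3 or 4 for a unit \<open>c \<noteq> 1\<close>.\<close>
lemma TL_conn_minus_one_coprime:
  assumes "coprime n 6" "m \<in> TL_conn n 1 r (r - 1)" "m \<noteq> 1"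
  shows "coprime (m - 1) n"
proof -
  obtain c where c: "c \<in> EJ_conn" "m = eis_eval r c mod n"
    using assms(2) by (auto simp: TL_conn_eq_eval_image)
  show ?thesis
  proof (cases "c = (1, 0)")
    case True
    then have "1 mod n \<noteq> 1" using c assms(3) by (simp add: eis_eval_def)
    then have "n = 1" using n_pos by (cases "n = 1") auto
    then show ?thesis by simp
  next
    case False
    then have "0 < eis_norm (eis_sub c (1, 0))"
      by (intro eis_norm_pos) (auto simp: eis_sub_def prod_eq_iff)
    moreover have "eis_norm (eis_sub c (1, 0)) \<le> 4"
      using c(1) by (rule EJ_conn_diff_norm_le) (simp add: EJ_conn_def)
    ultimately have "coprime (eis_eval r c - 1) n"
      using coprime_eval coprime_if_le_4[OF assms(1)] by fastforce
    moreover have "[eis_eval r c - 1 = m - 1] (mod n)"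
      by (simp add: c cong_def mod_diff_left_eq)
    ultimately show ?thesis using cong_imp_coprime by blast
  qed
qed

lemma card_TL_conn: "5 \<le> n \<Longrightarrow> card (TL_conn n 1 r (r - 1)) = 6"
  using eval_mod_inj_on_EJ_conn by (simp add: TL_conn_eq_eval_image card_image card_EJ_conn)

lemma first_kind_frobenius_circulant_TL:
  assumes "7 \<le> n" "coprime n 6"
  shows "first_kind_frobenius_circulant n 1 r (r - 1)"
proof -
  let ?H = "TL_conn n 1 r (r - 1)"
  have H_range: "?H \<subseteq> {0..<n}" and one: "1 \<in> ?H"
    using unit_subgroup_TL_conn assms(1) by (auto simp: unit_subgroup_def)
  have "(-1) mod n \<in> ?H" "(-1) mod n \<noteq> 1"
    using assms(1) by (auto simp: TL_conn_def zmod_zminus1_eq_if)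
  then have "frobenius_with_cyclic_kernel n ?H"
    using assms unit_subgroup_TL_conn TL_conn_minus_one_coprime
    by (intro frobenius_with_cyclic_kernelI) auto
  then show ?thesis
    unfolding first_kind_frobenius_circulant_def six_valent_TL_def
    using assms unit_subgroup_TL_conn card_TL_conn orbit_mult_one[OF H_range]
      zn_span_eq_if_one_mem[OF n_pos one H_range]
    by (intro conjI exI[of _ ?H] exI[of _ 1]) auto
qed

definition class_residue :: "eis set \<Rightarrow> int" where
  "class_residue X = eis_eval r (SOME x. x \<in> X) mod n"

lemma class_residue_eis_class:
  assumes "eis_dvd (p, q) g"
  shows "class_residue (eis_class g a) = eis_eval r a mod n"
proof -
  have "a \<in> eis_class g a" using equiv_class_self[OF equiv_eis_cong_rel] by simp
  then have "(SOME x. x \<in> eis_class g a) \<in> eis_class g a" by (rule someI)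
  then have "eis_dvd g (eis_sub a (SOME x. x \<in> eis_class g a))"
    by (simp add: eis_cong_rel_iff)
  then have "eis_dvd (p, q) (eis_sub a (SOME x. x \<in> eis_class g a))"
    using assms eis_dvd_trans by blast
  then have "eis_eval r a mod n = eis_eval r (SOME x. x \<in> eis_class g a) mod n"
    by (simp add: eval_mod_eq_iff)
  then show ?thesis by (simp add: class_residue_def)
qed

lemma class_residue_image:
  assumes "eis_dvd (p, q) g"
  shows "class_residue ` verts (EJ g) = {0..<n}"
proof -
  have "class_residue ` verts (EJ g) = (\<lambda>a. eis_eval r a mod n) ` UNIV"
    by (simp add: verts_EJ image_image class_residue_eis_class[OF assms])
  also have "\<dots> = {0..<n}"
  proof (intro equalityI subsetI)
    fix w assume "w \<in> {0..<n}"
    then have "w = eis_eval r (w, 0) mod n" by simp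
    then show "w \<in> (\<lambda>a. eis_eval r a mod n) ` UNIV" by blast
  qed (use n_pos in auto)
  finally show ?thesis .
qed

lemma class_residue_nbhd:
  assumes "5 \<le> n" "eis_dvd (p, q) g" "v \<in> verts (EJ g)"
  shows "bij_betw class_residue (nbhd (EJ g) v) (nbhd (TL n 1 r (r - 1)) (class_residue v))"
proof -
  obtain a where v: "v = eis_class g a" using assms(3) by (auto simp: verts_EJ)
  define h where "h c = eis_class g (eis_add a c)" for c
  have residue_h: "class_residue (h c) = (eis_eval r a + eis_eval r c) mod n" for c
    by (simp add: h_def class_residue_eis_class[OF assms(2)])
  have "inj_on (class_residue \<circ> h) EJ_conn"
  proof (rule inj_onI)
    fix c c' assume c: "c \<in> EJ_conn" "c' \<in> EJ_conn" "(class_residue \<circ> h) c = (class_residue \<circ> h) c'"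
    then have "eis_eval r c mod n = eis_eval r c' mod n"
      by (simp add: residue_h mod_eq_dvd_iff)
    then show "c = c'" using eval_mod_inj_on_EJ_conn[OF assms(1)] c(1,2) by (auto dest: inj_onD)
  qed
  then have "bij_betw class_residue (h ` EJ_conn) (class_residue ` h ` EJ_conn)"
    by (intro inj_on_imp_bij_betw inj_on_imageI)
  moreover have "class_residue ` h ` EJ_conn = nbhd (TL n 1 r (r - 1)) (class_residue v)"
    by (simp add: v class_residue_eis_class[OF assms(2)] nbhd_TL[OF n_pos] TL_conn_eq_eval_image
        image_image residue_h mod_add_eq)
  ultimately show ?thesis by (simp add: v h_def nbhd_EJ)
qed

lemma class_residue_fibre:
  assumes "eis_dvd (p, q) g" "w \<in> {0..<n}"
  shows "{v \<in> verts (EJ g). class_residue v = w} = eis_class g ` {a. eis_dvd (p, q) (eis_sub a (w, 0))}"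
proof -
  have "class_residue (eis_class g a) = w \<longleftrightarrow> eis_dvd (p, q) (eis_sub a (w, 0))" for a
    using assms eval_mod_eq_iff[of a "(w, 0)"] by (simp add: class_residue_eis_class)
  then show ?thesis by (auto simp: verts_EJ)
qed

lemma k_fold_cover_EJ_TL:
  assumes "5 \<le> n" "0 < l"
  shows "is_k_fold_cover (nat (l\<^sup>2)) (EJ (l * p, l * q)) (TL n 1 r (r - 1))"
proof -
  have dvd: "eis_dvd (p, q) (l * p, l * q)"
    using eis_dvd_mult_left[OF eis_dvd_refl, of "(p, q)" "(l, 0)"] by simp
  have "(p, q) \<noteq> (0, 0)" using coprime_pq by auto
  then show ?thesis
    unfolding is_k_fold_cover_def
    using class_residue_image[OF dvd] class_residue_nbhd[OF assms(1) dvd]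
      class_residue_fibre[OF dvd] card_eis_classes_in_coset[OF _ assms(2)]
    by (intro exI[of _ class_residue]) simp
qed

lemma first_kind_TL_covered_by_EJ:
  assumes "7 \<le> n" "coprime n 6" "0 < l"
  shows "first_kind_frobenius_circulant n 1 r (r - 1) \<and>
    is_k_fold_cover (nat (l\<^sup>2)) (EJ (l * p, l * q)) (TL n 1 r (r - 1)) \<and>
    graph_iso (TL n 1 r (r - 1)) (EJ (p, q))"
proof -
  have "is_k_fold_cover 1 (EJ (p, q)) (TL n 1 r (r - 1))"
    using k_fold_cover_EJ_TL[of 1] assms(1) by simp
  then have "graph_iso (TL n 1 r (r - 1)) (EJ (p, q))"
    by (rule graph_iso_sym[OF one_fold_cover_imp_graph_iso])
  then show ?thesis
    using first_kind_frobenius_circulant_TL[OF assms(1,2)] k_fold_cover_EJ_TL[OF _ assms(3)] assms(1)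
    by simp
qed

end

section \<open>Primitive parts\<close>

lemma eis_norm_ge_7:
  assumes "coprime (eis_norm v) 6" "eis_norm v \<noteq> 1"
  shows "7 \<le> eis_norm v"
proof -
  have "v \<noteq> (0, 0)" using assms(1) by (auto simp: eis_norm_def)
  then have "0 < eis_norm v" by (rule eis_norm_pos)
  moreover have "coprime 2 (eis_norm v)" "coprime 3 (eis_norm v)"
    by (rule coprime_if_le_4[OF assms(1)]; simp)+
  then have "odd (eis_norm v)" "\<not> 3 dvd eis_norm v"
    using coprime_common_divisor[of 3 "eis_norm v" 3] by auto
  ultimately show ?thesis using assms(2) eis_norm_mod_3[of v] by presburger
qed

lemma norm_of_primitive_part:
  assumes "eis_norm (l * p, l * q) mod 6 = 1"
    and "\<not> (\<exists>m. eis_associate (l * p, l * q) (m, 0))"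
  shows "coprime (eis_norm (p, q)) 6" "7 \<le> eis_norm (p, q)"
proof -
  have "coprime (eis_norm (l * p, l * q)) 6"
    using assms(1) coprime_mod_left_iff[of 6 "eis_norm (l * p, l * q)"] by simp
  moreover have "eis_norm (l * p, l * q) = l\<^sup>2 * eis_norm (p, q)"
    by (simp add: eis_norm_def power2_eq_square algebra_simps)
  ultimately show "coprime (eis_norm (p, q)) 6" by simp
  moreover have "eis_norm (p, q) \<noteq> 1"
  proof
    assume "eis_norm (p, q) = 1"
    then obtain j where "(p, q) = eis_pow eis_rho j"
      using EJ_conn_rho_power by (auto simp: EJ_conn_eq_norm_1)
    then have "eis_associate (l * p, l * q) (l, 0)"
      unfolding eis_associate_def by (metis eis_mult_int_left)
    then show False using assms(2) by blast
  qed
  ultimately show "7 \<le> eis_norm (p, q)" by (rule eis_norm_ge_7)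
qed

theorem corollary4p2:
  fixes c d :: int
  assumes "eis_norm (c, d) \<ge> 7"
    and "eis_norm (c, d) mod 6 = 1"
    and "\<not> (\<exists>m::int. eis_associate (c, d) (m, 0))"
  shows "let l = gcd c d; c' = c div l; d' = d div l in
         \<exists>n a b e. first_kind_frobenius_circulant n a b e \<and>
           is_k_fold_cover (nat (l ^ 2)) (EJ (c, d)) (TL n a b e) \<and>
           graph_iso (TL n a b e) (EJ (c', d'))"
proof -
  define l where "l = gcd c d"
  define p where "p = c div l"
  define q where "q = d div l"
  define n where "n = eis_norm (p, q)"
  have "c \<noteq> 0 \<or> d \<noteq> 0" using assms(1) by (auto simp: eis_norm_def)
  then have "0 < l" "coprime p q"
    using div_gcd_coprime by (simp_all add: l_def p_def q_def)
  have cd: "(c, d) = (l * p, l * q)" by (simp add: l_def p_def q_def)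
  then have "coprime n 6" "7 \<le> n"
    using norm_of_primitive_part assms(2,3) by (simp_all add: n_def)
  obtain r where "n dvd p + q * r"
    using eis_reduction_root_exists[OF \<open>coprime p q\<close>] n_def by blast
  then interpret eis_reduction p q n r
    using \<open>coprime p q\<close> n_def by unfold_locales simp_all
  show ?thesis
    using first_kind_TL_covered_by_EJ[OF \<open>7 \<le> n\<close> \<open>coprime n 6\<close> \<open>0 < l\<close>] cd
    unfolding Let_def l_def[symmetric] p_def[symmetric] q_def[symmetric] by auto
qed

end
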